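(* Let $\lambda\ge 1$. There exists a probability measure $\nu_\lambda$ supported on $[-2,2]$ such that for all real $z>2$ $$\int_{\mathbb{R}}\frac{\nu_\lambda(dx)}{z-x}=T_\lambda(z):=G(z)^{1-1/\lambda}\,\big(z^2-4\big)^{-1/(2\lambda)}=\exp\left(-\int_{\mathbb{R}}\log(z-x)\,\tau_\lambda(dx)\right),$$ where $\tau_\lambda(dx)=(1-\frac1\lambda)\frac{\mathbf 1_{[-2,2]}(x)dx}{\pi\sqrt{4-x^2}}+\frac1\lambda\frac{\delta_{-2}+\delta_2}{2}(dx)$. Moreover $\nu_\lambda$ is absolutely continuous with density proportional to $$\cos\!\Big[\Big(1-\frac1\lambda\Big)\arcsin\frac x2\Big]\,(4-x^2)^{-1/(2\lambda)}\,\mathbf 1_{(-2,2)}(x).$$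
   Context: $G(z)=\frac{z-\sqrt{z^2-4}}{2}$ is the Cauchy–Stieltjes transform of the standard Wigner law (positive for real $z>2$); $1/\sqrt{z^2-4}$ is the Cauchy–Stieltjes transform of the arcsine law $\frac{dx}{\pi\sqrt{4-x^2}}$ on $[-2,2]$. $\delta_a$ is the Dirac mass at $a$. *)

theory Defs
  imports "HOL-Probability.Probability"
begin

text \<open>Cauchy--Stieltjes transform of the standard Wigner law (branch positive for real z > 2).\<close>
definition G :: "real \<Rightarrow> real" where
  "G z = (z - sqrt (z\<^sup>2 - 4)) / 2"

definition arcsine_dens :: "real \<Rightarrow> real" where
  "arcsine_dens x = indicator {-2..2} x / (pi * sqrt (4 - x\<^sup>2))"

definition T :: "real \<Rightarrow> real \<Rightarrow> real" where
  "T lam z = G z powr (1 - 1 / lam) * (z\<^sup>2 - 4) powr (- 1 / (2 * lam))"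

definition tau :: "real \<Rightarrow> real measure" where
  "tau lam = measure_of UNIV (sets borel)
     (\<lambda>A. ennreal (1 - 1 / lam) * (\<integral>\<^sup>+ x. ennreal (arcsine_dens x) * indicator A x \<partial>lborel)
          + ennreal (1 / lam) * ((indicator A (-2) + indicator A 2) / 2))"

definition nu_dens :: "real \<Rightarrow> real \<Rightarrow> real" where
  "nu_dens lam x = cos ((1 - 1 / lam) * arcsin (x / 2)) * (4 - x\<^sup>2) powr (- 1 / (2 * lam))
                   * indicator {-2<..<2} x"

end

theory Submission
  imports Defs
begin

(*
  Put a = 1 - 1/lam, so 0 <= a < 1.  Under the substitution x = 2 sin t, t in [-pi/2, pi/2],
  the density nu_dens lam times the Jacobian 2 cos t becomes the weight
      w_a(t) = (2 cos t)^a cos (a t),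
  so nu_lambda is the image under 2 sin of the measure with density w_a / K, K = int w_a.

  The moments K a b = int (2 cos t)^a cos (b t) satisfy a two-term recurrence
     (fundamental theorem of calculus); hence int w_a(t) cos (2 n t) = (a choose n) K / 2 for
     n >= 1, and K > 0.
  2. Series.  For 0 < q < 1 the Poisson kernel and ln (1 + 2 q cos 2t + q^2) have explicit
     cosine series.  A termwise integration lemma then gives: the Poisson integral of w_a is
     K (1 - q)^a (binomial series), and the mean of the logarithm vanishes.
  3. The point z.  With q = G(z)^2 one has q (z^2 - 4 sin^2 t) = 1 + 2 q cos 2t + q^2; so the
     even part of 1/(z - 2 sin t) is a multiple of the Poisson kernel, which yields the
     Cauchy transform of w_a, and symmetrising ln (z - 2 sin t) yields -pi ln G(z).
  4. Measures.  The change of variables identifies nu_lambda with the image measure above;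
     it is a probability measure with Cauchy transform T_lambda.  tau_lambda is the image of
     a density on the line under a map sending (-pi/2, pi/2) onto (-2, 2) by 2 sin and two
     unit intervals onto the atoms -2 and 2, which computes its logarithmic potential.
*)

lemma cos_nonneg_half: "t \<in> {-pi/2..pi/2} \<Longrightarrow> cos t \<ge> 0"
  by (auto intro!: cos_ge_zero)

lemma cos_pos_half: "t \<in> {-pi/2<..<pi/2} \<Longrightarrow> cos t > 0"
  by (auto intro!: cos_gt_zero_pi)

definition cos_moment :: "real \<Rightarrow> real \<Rightarrow> real" where
  "cos_moment a b = integral {-pi/2..pi/2} (\<lambda>t. (2 * cos t) powr a * cos (b * t))"

lemma cos_powr_integrable:
  assumes "0 \<le> a"
  shows "(\<lambda>t. (2 * cos t) powr a * cos (b * t)) integrable_on {-pi/2..pi/2}"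
proof (cases "a = 0")
  case True
  have "(\<lambda>t. cos (b * t)) integrable_on {-pi/2..pi/2}"
    by (intro integrable_continuous_interval continuous_intros)
  then show ?thesis
  proof (rule integrable_spike_finite[where S="{-pi/2, pi/2}", rotated 2])
    fix t assume "t \<in> {-pi/2..pi/2} - {-pi/2, pi/2}"
    then have "cos t > 0" using cos_pos_half[of t] by auto
    then show "(2 * cos t) powr a * cos (b * t) = cos (b * t)" using True by simp
  qed simp
next
  case False
  then have "a > 0" using assms by simp
  show ?thesis
    by (intro integrable_continuous_interval continuous_intros continuous_on_powr')
       (use \<open>a > 0\<close> cos_nonneg_half in auto)
qed

(* The function (2 cos t)^(a+1) sin ((a+1+2m) t) vanishes at both ends of the half period, and
   its derivative is a combination of the integrands of the moments at frequencies a + 2m and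
   a + 2m + 2; integrating the derivative gives the recurrence. *)
lemma cos_moment_recurrence:
  assumes "0 \<le> a"
  shows "m * cos_moment a (a + 2*m) + (a + m + 1) * cos_moment a (a + 2*m + 2) = 0"
proof -
  define \<beta> where "\<beta> = a + 1 + 2*m"
  define P where "P t = (2 * cos t) powr (a+1) * sin (\<beta> * t)" for t
  define P' where "P' t = 2*m * ((2 * cos t) powr a * cos ((a + 2*m) * t))
                        + 2*(a+m+1) * ((2 * cos t) powr a * cos ((a + 2*m + 2) * t))" for t
  have contP: "continuous_on {-pi/2..pi/2} P" unfolding P_def
    by (intro continuous_intros continuous_on_powr') (use assms cos_nonneg_half in auto)
  have derP: "(P has_vector_derivative P' t) (at t)" if t: "t \<in> {-pi/2<..<pi/2}" for t
  proof -
    have c: "cos t > 0" using cos_pos_half[OF t] .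
    have split_power: "(cos t * 2) powr (1 + a) = cos t * 2 * (cos t * 2) powr a"
      using c by (simp add: powr_add)
    have "(P has_real_derivative
        ((a+1) * (2 * cos t) powr a * (- 2 * sin t) * sin (\<beta> * t)
         + (2 * cos t) powr a * (2 * cos t) * (cos (\<beta> * t) * \<beta>))) (at t)"
      unfolding P_def using c
      by (intro derivative_eq_intros DERIV_powr) (auto simp: field_simps split_power)
    moreover have "(a+1) * (2 * cos t) powr a * (- 2 * sin t) * sin (\<beta> * t)
         + (2 * cos t) powr a * (2 * cos t) * (cos (\<beta> * t) * \<beta>) = P' t"
    proof -
      have c1: "cos ((a + 2*m) * t) = cos (\<beta> * t) * cos t + sin (\<beta> * t) * sin t"
        using cos_diff[of "\<beta>*t" t] by (simp add: \<beta>_def algebra_simps)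
      have c2: "cos ((a + 2*m + 2) * t) = cos (\<beta> * t) * cos t - sin (\<beta> * t) * sin t"
        using cos_add[of "\<beta>*t" t] by (simp add: \<beta>_def algebra_simps)
      show ?thesis unfolding P'_def c1 c2 by (simp add: algebra_simps \<beta>_def)
    qed
    ultimately show ?thesis by (simp add: has_real_derivative_iff_has_vector_derivative)
  qed
  have "(P' has_integral (P (pi/2) - P (-pi/2))) {-pi/2..pi/2}"
    by (rule fundamental_theorem_of_calculus_interior[OF _ contP derP]) auto
  moreover have "P (pi/2) = 0" "P (-pi/2) = 0" by (auto simp: P_def)
  ultimately have "(P' has_integral 0) {-pi/2..pi/2}" by simp
  moreover have "(P' has_integral (2*m * cos_moment a (a + 2*m)
                   + 2*(a+m+1) * cos_moment a (a + 2*m + 2))) {-pi/2..pi/2}"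
    unfolding P'_def cos_moment_def
    by (intro has_integral_add has_integral_mult_right integrable_integral cos_powr_integrable assms)
  ultimately have "2*m * cos_moment a (a + 2*m) + 2*(a+m+1) * cos_moment a (a + 2*m + 2) = 0"
    using has_integral_unique by blast
  then show ?thesis by (simp add: algebra_simps)
qed

lemma cos_moment_above:
  assumes "0 \<le> a"
  shows "cos_moment a (a + 2 * real (Suc n)) = 0"
proof (induction n)
  case 0
  from cos_moment_recurrence[OF assms, of 0] show ?case using assms by simp
next
  case (Suc n)
  from cos_moment_recurrence[OF assms, of "real (Suc n)"] Suc
  have "(a + real (Suc n) + 1) * cos_moment a (a + 2 * real (Suc n) + 2) = 0" by simp
  moreover have "a + real (Suc n) + 1 > 0" using assms by simp
  ultimately have "cos_moment a (a + 2 * real (Suc n) + 2) = 0" by simp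
  then show ?case by (simp add: algebra_simps)
qed

lemma cos_moment_below:
  assumes "0 \<le> a"
  shows "cos_moment a (a - 2 * real n) = (a gchoose n) * cos_moment a a"
proof (induction n)
  case (Suc n)
  from cos_moment_recurrence[OF assms, of "- real (Suc n)"]
  have "real (Suc n) * cos_moment a (a - 2 * real (Suc n)) = (a - real n) * cos_moment a (a - 2 * real n)"
    by (simp add: algebra_simps)
  also have "\<dots> = (a - real n) * (a gchoose n) * cos_moment a a"
    using Suc by simp
  also have "(a - real n) * (a gchoose n) = real (Suc n) * (a gchoose Suc n)"
    using gbinomial_mult_1[of a n] by (simp add: left_diff_distrib)
  finally show ?case by simp
qed simp

(* The weight w_a(t) = (2 cos t)^a cos (a t), the image of nu_dens under x = 2 sin t. *)
definition weight :: "real \<Rightarrow> real \<Rightarrow> real" where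
  "weight a t = (2 * cos t) powr a * cos (a * t)"

lemma weight_measurable[measurable]: "weight a \<in> borel_measurable borel"
  unfolding weight_def by measurable

lemma weight_even: "weight a (-t) = weight a t"
  by (simp add: weight_def)

lemma weight_endpoints: "weight a (pi/2) = 0" "weight a (-(pi/2)) = 0"
  by (simp_all add: weight_def)

lemma weight_fourier:
  assumes "0 \<le> a"
  shows "integral {-pi/2..pi/2} (\<lambda>t. weight a t * cos (2 * real n * t))
           = (if n = 0 then cos_moment a a else (a gchoose n) / 2 * cos_moment a a)"
proof (cases n)
  case 0
  then show ?thesis by (simp add: weight_def cos_moment_def)
next
  case (Suc m)
  have "integral {-pi/2..pi/2} (\<lambda>t. weight a t * cos (2 * real n * t))
      = integral {-pi/2..pi/2} (\<lambda>t. ((2 * cos t) powr a * cos ((a + 2 * real n) * t)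
                                     + (2 * cos t) powr a * cos ((a - 2 * real n) * t)) / 2)"
  proof (rule integral_cong)
    fix t
    have "weight a t * cos (2 * real n * t) = (2 * cos t) powr a * (cos (a * t) * cos (2 * real n * t))"
      by (simp add: weight_def)
    also have "cos (a * t) * cos (2 * real n * t) = (cos ((a + 2 * real n) * t) + cos ((a - 2 * real n) * t)) / 2"
      by (simp add: cos_times_cos algebra_simps)
    finally show "weight a t * cos (2 * real n * t) = ((2 * cos t) powr a * cos ((a + 2 * real n) * t)
                                     + (2 * cos t) powr a * cos ((a - 2 * real n) * t)) / 2"
      by (simp add: distrib_left)
  qed
  also have "\<dots> = (cos_moment a (a + 2 * real n) + cos_moment a (a - 2 * real n)) / 2"
    unfolding cos_moment_def
    by (intro integral_unique has_integral_divide has_integral_add integrable_integral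
              cos_powr_integrable assms)
  also have "\<dots> = (a gchoose n) / 2 * cos_moment a a"
    using cos_moment_above[OF assms, of m] cos_moment_below[OF assms, of n] Suc by simp
  finally show ?thesis using Suc by simp
qed

lemma weight_bounds:
  assumes "0 \<le> a" "a < 1" "t \<in> {-pi/2..pi/2}"
  shows "0 \<le> weight a t" "weight a t \<le> 2"
proof -
  have c: "0 \<le> 2 * cos t" "2 * cos t \<le> 2" using cos_nonneg_half[OF assms(3)] by auto
  have "(2 * cos t) powr a \<le> 2 powr a" by (rule powr_mono2) (use assms c in auto)
  also have "\<dots> \<le> 2 powr 1" by (rule powr_mono) (use assms in auto)
  finally have pow: "(2 * cos t) powr a \<le> 2" by simp
  have "\<bar>a * t\<bar> \<le> 1 * \<bar>t\<bar>" unfolding abs_mult by (rule mult_right_mono) (use assms in auto)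
  then have "\<bar>a * t\<bar> \<le> pi/2" using assms(3) by auto
  then have "-(pi/2) \<le> a * t" "a * t \<le> pi/2" by (auto simp: abs_le_iff)
  then have cos_nonneg: "cos (a * t) \<ge> 0" by (rule cos_ge_zero)
  then show "0 \<le> weight a t" unfolding weight_def by simp
  have "weight a t \<le> 2 * 1" unfolding weight_def by (intro mult_mono pow cos_nonneg) auto
  then show "weight a t \<le> 2" by simp
qed

lemma cos_ge_half:
  assumes "\<bar>x\<bar> \<le> pi/3"
  shows "cos x \<ge> 1/2"
proof -
  have "cos (pi/3) \<le> cos \<bar>x\<bar>" by (rule cos_monotone_0_pi_le) (use assms in auto)
  then show ?thesis by (simp add: cos_60)
qed

(* The total mass K = cos_moment a a of the weight is positive: w_a >= 1/2 on [-pi/3, pi/3]. *)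
lemma cos_moment_pos:
  assumes a: "0 \<le> a" "a < 1"
  shows "cos_moment a a > 0"
proof -
  have int_half: "weight a integrable_on {-pi/2..pi/2}"
    using cos_powr_integrable[OF a(1), of a] unfolding weight_def .
  have int_third: "weight a integrable_on {-pi/3..pi/3}"
    by (rule integrable_on_subinterval[OF int_half]) (auto simp: divide_simps)
  have lower: "1/2 \<le> weight a t" if t: "t \<in> {-pi/3..pi/3}" for t
  proof -
    have tt: "\<bar>t\<bar> \<le> pi/3" using t by auto
    have "1 \<le> (2 * cos t) powr a" using cos_ge_half[OF tt] a by (intro ge_one_powr_ge_zero) auto
    moreover have "\<bar>a * t\<bar> \<le> pi/3"
      using mult_right_mono[of a 1 "\<bar>t\<bar>"] a tt by (simp add: abs_mult)
    then have "cos (a * t) \<ge> 1/2" by (rule cos_ge_half)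
    ultimately have "1 * (1/2) \<le> (2 * cos t) powr a * cos (a * t)" by (intro mult_mono) auto
    then show ?thesis by (simp add: weight_def)
  qed
  have "pi/3 = integral {-pi/3..pi/3} (\<lambda>t. 1/2 :: real)" by simp
  also have "\<dots> \<le> integral {-pi/3..pi/3} (weight a)"
    by (rule integral_le) (use int_third lower in auto)
  also have "\<dots> \<le> integral {-pi/2..pi/2} (weight a)"
    by (rule integral_subset_le)
       (use int_third int_half weight_bounds[OF a] in \<open>auto simp: divide_simps\<close>)
  also have "\<dots> = cos_moment a a" by (simp add: cos_moment_def weight_def[abs_def])
  finally show ?thesis using pi_gt_zero by linarith
qed

lemma lborel_integral_interval:
  fixes f :: "real \<Rightarrow> real"
  assumes [measurable]: "f \<in> borel_measurable borel" "S \<in> sets borel"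
    and bound: "\<And>t. t \<in> {l..u} \<Longrightarrow> \<bar>f t\<bar> \<le> B"
    and S: "{l<..<u} \<subseteq> S" "S \<subseteq> {l..u}"
  shows "integrable lborel (\<lambda>t. indicator S t * f t)"
    and "(\<integral>t. indicator S t * f t \<partial>lborel) = integral {l..u} f"
    and "f integrable_on {l..u}"
proof -
  have B0: "0 \<le> B" if "x \<in> {l..u}" for x using bound[OF that] by linarith
  show int: "integrable lborel (\<lambda>t. indicator S t * f t)"
  proof (rule integrableI_bounded_set[where A="{l..u}" and B=B])
    show "AE x in lborel. x \<in> {l..u} \<longrightarrow> norm (indicator S x * f x) \<le> B"
      using bound B0 by (intro AE_I2 impI) (auto simp: indicator_def)
  qed (use S in \<open>auto intro!: AE_I2 simp: emeasure_lborel_Icc_eq indicator_def\<close>)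
  define L where "L = (\<integral>t. indicator S t * f t \<partial>lborel)"
  have "((\<lambda>t. indicator S t * f t) has_integral L) UNIV"
    unfolding L_def by (rule has_integral_integral_lborel[OF int])
  then have "((\<lambda>t. if t \<in> {l..u} then f t else 0) has_integral L) UNIV"
    by (rule has_integral_spike_finite[where S="{l, u}", rotated 2])
       (use S in \<open>auto simp: indicator_def subset_iff\<close>)
  then have "(f has_integral L) {l..u}"
    by (simp only: has_integral_restrict_UNIV)
  then show "(\<integral>t. indicator S t * f t \<partial>lborel) = integral {l..u} f" "f integrable_on {l..u}"
    unfolding L_def[symmetric] by (auto simp: integral_unique)
qed

lemma sums_integral_geometric:
  fixes w :: "real \<Rightarrow> real" and \<phi> :: "nat \<Rightarrow> real \<Rightarrow> real"
  assumes [measurable]: "w \<in> borel_measurable borel" "S \<in> sets borel" "\<And>n. \<phi> n \<in> borel_measurable borel"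
    and finite: "emeasure lborel S < \<infinity>"
    and w_bound: "\<And>t. \<bar>w t\<bar> \<le> W" and w_supp: "\<And>t. t \<notin> S \<Longrightarrow> w t = 0"
    and \<phi>_bound: "\<And>n t. t \<in> S \<Longrightarrow> \<bar>\<phi> n t\<bar> \<le> M * q ^ n"
    and q: "0 \<le> q" "q < 1"
    and sums: "\<And>t. t \<in> S \<Longrightarrow> (\<lambda>n. \<phi> n t) sums \<Phi> t"
  shows "(\<lambda>n. \<integral>t. w t * \<phi> n t \<partial>lborel) sums (\<integral>t. w t * \<Phi> t \<partial>lborel)"
proof -
  have W0: "0 \<le> W" using w_bound[of 0] by simp
  have bound: "\<bar>w t * \<phi> n t\<bar> \<le> W * M * q ^ n * indicator S t" for n t
    using w_supp[of t] unfolding abs_mult mult.assoc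
    by (cases "t \<in> S") (auto intro!: mult_mono w_bound \<phi>_bound W0)
  have int: "integrable lborel (\<lambda>t. w t * \<phi> n t)" for n
  proof (rule integrableI_bounded_set[where A=S and B="W * M * q ^ n"])
    show "AE t in lborel. t \<in> S \<longrightarrow> norm (w t * \<phi> n t) \<le> W * M * q ^ n"
    proof (intro AE_I2 impI)
      fix t assume "t \<in> S"
      then show "norm (w t * \<phi> n t) \<le> W * M * q ^ n" using bound[of t n] by simp
    qed
  qed (use finite w_supp in auto)
  have geom: "summable (\<lambda>n. W * M * q ^ n)"
    using q by (intro summable_mult summable_geometric) auto
  have pointwise: "AE t in lborel. summable (\<lambda>n. norm (w t * \<phi> n t))"
  proof (rule AE_I2)
    fix t
    show "summable (\<lambda>n. norm (w t * \<phi> n t))"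
      by (rule summable_comparison_test'[OF summable_mult2[OF geom, of "indicator S t"]])
         (use bound in auto)
  qed
  have norm_int: "(\<integral>t. norm (w t * \<phi> n t) \<partial>lborel) \<le> W * M * q ^ n * measure lborel S" for n
  proof -
    have "(\<integral>t. norm (w t * \<phi> n t) \<partial>lborel) \<le> (\<integral>t. W * M * q ^ n * indicator S t \<partial>lborel)"
      using int bound finite by (intro integral_mono) (auto intro!: integrable_real_indicator)
    then show ?thesis using finite by simp
  qed
  have summable_int: "summable (\<lambda>n. \<integral>t. norm (w t * \<phi> n t) \<partial>lborel)"
    by (rule summable_comparison_test'[OF summable_mult2[OF geom, of "measure lborel S"]])
       (use norm_int in auto)
  have "(\<lambda>n. \<integral>t. w t * \<phi> n t \<partial>lborel) sums (\<integral>t. (\<Sum>n. w t * \<phi> n t) \<partial>lborel)"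
    by (rule sums_integral[OF int pointwise summable_int])
  moreover have "(\<Sum>n. w t * \<phi> n t) = w t * \<Phi> t" for t
    using sums[of t] w_supp[of t] by (cases "t \<in> S") (auto intro: sums_unique[symmetric] sums_mult)
  ultimately show ?thesis by simp
qed

lemma sums_integral_interval:
  fixes f \<Phi> :: "real \<Rightarrow> real" and \<phi> :: "nat \<Rightarrow> real \<Rightarrow> real"
  assumes [measurable]: "f \<in> borel_measurable borel" "\<Phi> \<in> borel_measurable borel"
      "\<And>n. \<phi> n \<in> borel_measurable borel"
    and f_bound: "\<And>t. t \<in> {l..u} \<Longrightarrow> \<bar>f t\<bar> \<le> W"
    and \<Phi>_bound: "\<And>t. t \<in> {l..u} \<Longrightarrow> \<bar>\<Phi> t\<bar> \<le> B"
    and \<phi>_bound: "\<And>n t. t \<in> {l..u} \<Longrightarrow> \<bar>\<phi> n t\<bar> \<le> M * q ^ n"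
    and q: "0 \<le> q" "q < 1"
    and sums: "\<And>t. t \<in> {l..u} \<Longrightarrow> (\<lambda>n. \<phi> n t) sums \<Phi> t"
  shows "(\<lambda>n. integral {l..u} (\<lambda>t. f t * \<phi> n t)) sums integral {l..u} (\<lambda>t. f t * \<Phi> t)"
proof -
  have W0: "0 \<le> W" if "t \<in> {l..u}" for t using f_bound[OF that] by linarith
  have to_lborel: "integral {l..u} (\<lambda>t. f t * g t) = (\<integral>t. indicator {l..u} t * f t * g t \<partial>lborel)"
    if [measurable]: "g \<in> borel_measurable borel" and bound: "\<And>t. t \<in> {l..u} \<Longrightarrow> \<bar>g t\<bar> \<le> G"
    for g G
  proof -
    have fg_bound: "\<bar>f t * g t\<bar> \<le> W * G" if "t \<in> {l..u}" for t
      unfolding abs_mult using f_bound[OF that] bound[OF that] W0[OF that]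
      by (intro mult_mono) auto
    have "(\<integral>t. indicator {l..u} t * (f t * g t) \<partial>lborel) = integral {l..u} (\<lambda>t. f t * g t)"
      by (rule lborel_integral_interval(2)[where S="{l..u}", OF _ _ fg_bound]) auto
    then show ?thesis by (simp add: mult.assoc)
  qed
  have "(\<lambda>n. \<integral>t. indicator {l..u} t * f t * \<phi> n t \<partial>lborel)
          sums (\<integral>t. indicator {l..u} t * f t * \<Phi> t \<partial>lborel)"
  proof (rule sums_integral_geometric[where w="\<lambda>t. indicator {l..u} t * f t" and S="{l..u}",
                                       OF _ _ _ _ _ _ \<phi>_bound q sums])
    show "\<bar>indicator {l..u} t * f t\<bar> \<le> max W 0" for t
      using f_bound[of t] by (cases "t \<in> {l..u}") auto
  qed (auto simp: emeasure_lborel_Icc_eq)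
  moreover have "integral {l..u} (\<lambda>t. f t * \<phi> n t) = (\<integral>t. indicator {l..u} t * f t * \<phi> n t \<partial>lborel)" for n
    by (rule to_lborel[OF _ \<phi>_bound]) simp
  moreover have "integral {l..u} (\<lambda>t. f t * \<Phi> t) = (\<integral>t. indicator {l..u} t * f t * \<Phi> t \<partial>lborel)"
    by (rule to_lborel[OF _ \<Phi>_bound]) simp
  ultimately show ?thesis by simp
qed

lemma G_facts:
  assumes "z > 2"
  shows "0 < G z" "G z < 1" "G z + 1 / G z = z" "sqrt (z\<^sup>2 - 4) = 1 / G z - G z"
proof -
  define s where "s = sqrt (z\<^sup>2 - 4)"
  have zz: "2 * 2 < z * z" by (rule mult_strict_mono) (use assms in auto)
  have s0: "0 < s" unfolding s_def using zz by (simp add: power2_eq_square)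
  have ss: "s\<^sup>2 = z\<^sup>2 - 4" unfolding s_def using zz by (simp add: power2_eq_square)
  have "s\<^sup>2 < z\<^sup>2" using ss by simp
  then have sz: "s < z" using s0 assms by (smt (verit) power_mono)
  have g: "G z = (z - s) / 2" by (simp add: G_def s_def)
  show g0: "0 < G z" using g sz by simp
  have "(z - 2)\<^sup>2 < s\<^sup>2" using ss assms by (simp add: power2_eq_square algebra_simps)
  then have "z - 2 < s" using s0 by (smt (verit) power_mono)
  then show "G z < 1" using g by simp
  have "(z - s) * (z + s) = 4" using ss by (simp add: power2_eq_square algebra_simps)
  then have "G z * ((z + s) / 2) = 1" unfolding g by (simp add: field_simps)
  then have inv: "1 / G z = (z + s) / 2" using g0 by (simp add: field_simps)
  show "G z + 1 / G z = z" using g inv by simp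
  show "sqrt (z\<^sup>2 - 4) = 1 / G z - G z" using g inv s_def by simp
qed

(* With q = G(z)^2 the kernel z^2 - 4 sin^2 t is, up to the factor q, the Poisson denominator
   1 + 2 q cos 2t + q^2; this links both series below to the point z. *)
lemma sin_kernel_factorization:
  assumes "z > 2"
  shows "(G z)\<^sup>2 * (z\<^sup>2 - 4 * (sin t)\<^sup>2) = 1 + 2 * (G z)\<^sup>2 * cos (2 * t) + ((G z)\<^sup>2)\<^sup>2"
proof -
  define g where "g = G z"
  have g: "0 < g" "z = g + 1 / g" using G_facts[OF assms] by (auto simp: g_def)
  have "g\<^sup>2 * (z\<^sup>2 - 4 * (sin t)\<^sup>2) = g\<^sup>2 * ((g + 1 / g)\<^sup>2 - 4 * (sin t)\<^sup>2)"
    by (simp add: g(2)[symmetric])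
  also have "\<dots> = 1 + 2 * g\<^sup>2 * cos (2 * t) + (g\<^sup>2)\<^sup>2"
    unfolding cos_double_sin using g(1) by (simp add: field_simps power2_eq_square)
  finally show ?thesis unfolding g_def .
qed

lemma square_gt_four: "(z::real) > 2 \<Longrightarrow> z\<^sup>2 - 4 > 0"
  using mult_strict_mono[of 2 z 2 z] by (simp add: power2_eq_square)

lemma sin_kernel_pos:
  fixes z t :: real
  assumes "z > 2"
  shows "z - 2 * sin t > 0" "z + 2 * sin t > 0" "z\<^sup>2 - 4 * (sin t)\<^sup>2 \<ge> z\<^sup>2 - 4"
proof -
  show "z - 2 * sin t > 0" "z + 2 * sin t > 0"
    using assms sin_le_one[of t] sin_ge_minus_one[of t] by linarith+
  have "(sin t)\<^sup>2 \<le> 1" using sin_cos_squared_add[of t] zero_le_power2[of "cos t"] by linarith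
  then show "z\<^sup>2 - 4 * (sin t)\<^sup>2 \<ge> z\<^sup>2 - 4" by simp
qed

(* Real part of the geometric series in r e^{i phi}. *)
lemma cos_geometric_series:
  fixes r :: real
  assumes "\<bar>r\<bar> < 1"
  shows "(\<lambda>n. r ^ n * cos (real n * \<phi>)) sums ((1 - r * cos \<phi>) / (1 - 2 * r * cos \<phi> + r\<^sup>2))"
proof -
  define w where "w = complex_of_real r * cis \<phi>"
  have "norm w < 1" using assms by (simp add: w_def norm_mult)
  then have "(\<lambda>n. w ^ n) sums (1 / (1 - w))" by (rule geometric_sums)
  then have "(\<lambda>n. Re (w ^ n)) sums Re (1 / (1 - w))" by (simp add: sums_complex_iff)
  moreover have "Re (w ^ n) = r ^ n * cos (real n * \<phi>)" for n
  proof -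
    have "Re (cis \<phi> ^ n) = cos (real n * \<phi>)" by (simp add: cis_power_int flip: power_int_of_nat)
    then show ?thesis by (simp add: w_def power_mult_distrib)
  qed
  moreover have "(1 - r * cos \<phi>)\<^sup>2 + (r * sin \<phi>)\<^sup>2 = 1 - 2 * r * cos \<phi> + r\<^sup>2"
    using sin_cos_squared_add[of \<phi>] unfolding power2_eq_square by algebra
  then have "Re (1 / (1 - w)) = (1 - r * cos \<phi>) / (1 - 2 * r * cos \<phi> + r\<^sup>2)"
    by (simp add: Re_divide w_def)
  ultimately show ?thesis by simp
qed

lemma poisson_denominator_bounds:
  fixes q \<theta> :: real
  assumes "0 \<le> q"
  shows "(1 - q)\<^sup>2 \<le> 1 + 2 * q * cos \<theta> + q\<^sup>2" "1 + 2 * q * cos \<theta> + q\<^sup>2 \<le> (1 + q)\<^sup>2"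
  using mult_left_mono[OF cos_ge_minus_one[of \<theta>] assms] mult_left_mono[OF cos_le_one[of \<theta>] assms]
  by (simp_all add: power2_eq_square algebra_simps)

(* The Poisson kernel of the unit disc, in the variable 2t and at radius -q. *)
lemma poisson_series:
  assumes q: "0 < q" "q < 1"
  shows "(\<lambda>n. (if n = 0 then 1 else 2) * (-q) ^ n * cos (2 * real n * t))
           sums ((1 - q\<^sup>2) / (1 + 2 * q * cos (2 * t) + q\<^sup>2))"
proof -
  define D where "D = 1 + 2 * q * cos (2 * t) + q\<^sup>2"
  have "D \<ge> (1 - q)\<^sup>2" using poisson_denominator_bounds(1)[of q "2 * t"] q by (simp add: D_def)
  then have D0: "D > 0" using q by (smt (verit) zero_less_power2)
  have "(\<lambda>n. (-q) ^ n * cos (2 * real n * t)) sums ((1 + q * cos (2 * t)) / D)"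
    using cos_geometric_series[of "-q" "2 * t"] q by (simp add: D_def mult_ac)
  then have "(\<lambda>n. 2 * ((-q) ^ n * cos (2 * real n * t)) - (if n = 0 then 1 else 0))
               sums (2 * ((1 + q * cos (2 * t)) / D) - 1)"
    using sums_single[of 0 "\<lambda>_. 1::real"] by (intro sums_diff sums_mult) auto
  moreover have "(\<lambda>n. 2 * ((-q) ^ n * cos (2 * real n * t)) - (if n = 0 then 1 else 0))
      = (\<lambda>n. (if n = 0 then 1 else 2) * (-q) ^ n * cos (2 * real n * t))"
    by auto
  moreover have "2 * ((1 + q * cos (2 * t)) / D) - 1 = (1 - q\<^sup>2) / D"
    using D0 by (simp add: field_simps D_def power2_eq_square)
  ultimately show ?thesis by (simp add: D_def)
qed

(* Real part of the series of Ln (1 + q e^{2it}). *)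
lemma log_cos_series:
  assumes q: "0 < q" "q < 1"
  shows "(\<lambda>n. - ((-q) ^ n * cos (2 * real n * t)) / real n)
           sums (ln (1 + 2 * q * cos (2 * t) + q\<^sup>2) / 2)"
proof -
  define w where "w = complex_of_real q * cis (2 * t)"
  have nw: "norm w < 1" using q by (simp add: w_def norm_mult)
  have series: "(\<lambda>n. Re (- ((-w)^n) / of_nat n)) sums Re (ln (1 + w))"
    using Ln_series'[OF nw] by (simp add: sums_complex_iff)
  have terms: "(\<lambda>n. Re (- ((-w)^n) / of_nat n)) = (\<lambda>n. - ((-q) ^ n * cos (2 * real n * t)) / real n)"
  proof (rule ext)
    fix n
    have "Re (cis (2 * t) ^ n) = cos (real n * (2 * t))" by (simp add: cis_power_int flip: power_int_of_nat)
    moreover have "(-w)^n = complex_of_real ((-q)^n) * cis (2 * t) ^ n"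
      by (simp add: w_def power_mult_distrib power_minus')
    ultimately show "Re (- ((-w)^n) / of_nat n) = - ((-q) ^ n * cos (2 * real n * t)) / real n"
      by (simp add: mult_ac)
  qed
  have sum: "Re (ln (1 + w)) = ln (1 + 2 * q * cos (2 * t) + q\<^sup>2) / 2"
  proof -
    have w1: "1 + w \<noteq> 0" using nw by (metis add.inverse_unique norm_minus_cancel norm_one less_irrefl)
    have "(norm (1 + w))\<^sup>2 = (1 + q * cos (2*t))\<^sup>2 + (q * sin (2*t))\<^sup>2"
      by (simp add: w_def cmod_power2)
    also have "\<dots> = 1 + 2 * q * cos (2 * t) + q\<^sup>2"
      using sin_cos_squared_add[of "2*t"] unfolding power2_eq_square by algebra
    finally have "ln (1 + 2 * q * cos (2 * t) + q\<^sup>2) = ln ((norm (1 + w))\<^sup>2)" by simp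
    also have "\<dots> = 2 * ln (norm (1 + w))" using w1 by (simp add: ln_realpow)
    finally show ?thesis using w1 by simp
  qed
  show ?thesis using series unfolding terms sum .
qed

lemma odd_integral_zero:
  fixes f :: "real \<Rightarrow> real"
  assumes "\<And>t. f (-t) = - f t"
  shows "integral {-b..b} f = 0"
proof -
  have "integral {-b..b} (\<lambda>x. f (-x)) = integral {-b..b} f"
    using Henstock_Kurzweil_Integration.integral_reflect_real[of b "-b" f] by simp
  then show ?thesis using assms by (simp add: integral_neg)
qed

(* The Poisson integral of the weight: expanding the kernel in its cosine series, the Fourier
   coefficients of w_a turn it into the binomial series of (1 - q)^a. *)
lemma weight_poisson_integral:
  assumes a: "0 \<le> a" "a < 1" and q: "0 < q" "q < 1"
  shows "integral {-pi/2..pi/2} (\<lambda>t. weight a t * ((1 - q\<^sup>2) / (1 + 2 * q * cos (2 * t) + q\<^sup>2)))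
           = cos_moment a a * (1 - q) powr a"
proof -
  define \<phi> where "\<phi> n t = (if n = 0 then 1 else 2) * (-q) ^ n * cos (2 * real n * t)" for n t
  have terms: "integral {-pi/2..pi/2} (\<lambda>t. weight a t * \<phi> n t) = cos_moment a a * ((a gchoose n) * (-q) ^ n)" for n
  proof -
    have "integral {-pi/2..pi/2} (\<lambda>t. weight a t * \<phi> n t)
        = (if n = 0 then 1 else 2) * (-q) ^ n * integral {-pi/2..pi/2} (\<lambda>t. weight a t * cos (2 * real n * t))"
      unfolding \<phi>_def by (simp add: mult_ac flip: integral_mult_right)
    then show ?thesis unfolding weight_fourier[OF a(1)] by (cases "n = 0") simp_all
  qed
  have "(\<lambda>n. integral {-pi/2..pi/2} (\<lambda>t. weight a t * \<phi> n t))
          sums integral {-pi/2..pi/2} (\<lambda>t. weight a t * ((1 - q\<^sup>2) / (1 + 2 * q * cos (2 * t) + q\<^sup>2)))"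
  proof (rule sums_integral_interval[where W=2 and B="(1 - q\<^sup>2) / (1 - q)\<^sup>2" and M=2 and q=q])
    show "\<bar>weight a t\<bar> \<le> 2" if "t \<in> {-pi/2..pi/2}" for t
      using weight_bounds[OF a that] by simp
    show "\<bar>(1 - q\<^sup>2) / (1 + 2 * q * cos (2 * t) + q\<^sup>2)\<bar> \<le> (1 - q\<^sup>2) / (1 - q)\<^sup>2" for t
    proof -
      have "0 < (1 - q)\<^sup>2" "(1 - q)\<^sup>2 \<le> 1 + 2 * q * cos (2 * t) + q\<^sup>2" "0 \<le> 1 - q\<^sup>2"
        using poisson_denominator_bounds(1)[of q "2 * t"] q by (auto simp: power_le_one)
      then show ?thesis by (simp add: frac_le)
    qed
    show "\<bar>\<phi> n t\<bar> \<le> 2 * q ^ n" for n t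
    proof -
      have "\<bar>\<phi> n t\<bar> = (if n = 0 then 1 else 2) * q ^ n * \<bar>cos (2 * real n * t)\<bar>"
        unfolding \<phi>_def using q by (simp add: abs_mult power_abs)
      also have "\<dots> \<le> 2 * q ^ n * 1" using q by (intro mult_mono) auto
      finally show ?thesis by simp
    qed
    show "(\<lambda>n. \<phi> n t) sums ((1 - q\<^sup>2) / (1 + 2 * q * cos (2 * t) + q\<^sup>2))" for t
      unfolding \<phi>_def by (rule poisson_series[OF q])
  qed (use q in \<open>auto simp: \<phi>_def\<close>)
  moreover have "(\<lambda>n. cos_moment a a * ((a gchoose n) * (-q) ^ n)) sums (cos_moment a a * (1 - q) powr a)"
    using gen_binomial_real[of "-q" a] q by (intro sums_mult) simp
  ultimately show ?thesis unfolding terms using sums_unique2 by blast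
qed

(* The even part z / (z^2 - 4 sin^2 t) of the Cauchy kernel 1 / (z - 2 sin t) is a multiple
   of the Poisson kernel at radius -q, q = G(z)^2. *)
lemma even_sin_kernel_poisson:
  assumes z: "z > 2"
  defines "q \<equiv> (G z)\<^sup>2"
  shows "z / (z\<^sup>2 - 4 * (sin t)\<^sup>2) = z * q / (1 - q\<^sup>2) * ((1 - q\<^sup>2) / (1 + 2 * q * cos (2 * t) + q\<^sup>2))"
proof -
  have q: "0 < q" "q < 1" using G_facts[OF z] by (auto simp: q_def power_less_one_iff)
  have D: "1 + 2 * q * cos (2 * t) + q\<^sup>2 = q * (z\<^sup>2 - 4 * (sin t)\<^sup>2)"
    using sin_kernel_factorization[OF z, of t] by (simp add: q_def)
  have "z\<^sup>2 - 4 * (sin t)\<^sup>2 \<noteq> 0" using sin_kernel_pos(3)[OF z, of t] square_gt_four[OF z] by linarith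
  moreover have "1 - q\<^sup>2 \<noteq> 0" using q power_less_one_iff[of q 2] by simp
  moreover have "z * q / Y * (Y / (q * X)) = z / X" if "X \<noteq> 0" "Y \<noteq> 0" for X Y
    using q that by (simp add: field_simps)
  ultimately show ?thesis unfolding D using q by simp
qed

lemma weight_even_kernel_integral:
  assumes a: "0 \<le> a" "a < 1" and z: "z > 2"
  shows "integral {-pi/2..pi/2} (\<lambda>t. weight a t * (z / (z\<^sup>2 - 4 * (sin t)\<^sup>2)))
           = cos_moment a a * (G z * (1 - (G z)\<^sup>2) powr (a - 1))"
proof -
  define g where "g = G z"
  define q where "q = g\<^sup>2"
  define C where "C = z * q / (1 - q\<^sup>2)"
  have g: "0 < g" "g < 1" "g + 1 / g = z" using G_facts[OF z] by (auto simp: g_def)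
  have q: "0 < q" "q < 1" using g by (auto simp: q_def power_less_one_iff)
  have "integral {-pi/2..pi/2} (\<lambda>t. weight a t * (z / (z\<^sup>2 - 4 * (sin t)\<^sup>2)))
          = C * integral {-pi/2..pi/2} (\<lambda>t. weight a t * ((1 - q\<^sup>2) / (1 + 2 * q * cos (2 * t) + q\<^sup>2)))"
    unfolding even_sin_kernel_poisson[OF z] C_def q_def g_def
    by (simp add: mult_ac flip: integral_mult_right)
  also have "\<dots> = cos_moment a a * (C * (1 - q) powr a)"
    unfolding weight_poisson_integral[OF a q] by simp
  also have "C * (1 - q) powr a = g * (1 - g\<^sup>2) powr (a - 1)"
  proof -
    have "(1 - q) powr a = (1 - q) * (1 - q) powr (a - 1)"
      using q by (simp add: powr_diff powr_add[symmetric] field_simps)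
    moreover have "C * (1 - q) = g"
    proof -
      have "z * q = g * (1 + q)"
        by (subst g(3)[symmetric]) (use g(1) in \<open>simp add: q_def field_simps power2_eq_square\<close>)
      moreover have "1 - q\<^sup>2 = (1 - q) * (1 + q)" by (simp add: power2_eq_square algebra_simps)
      moreover have "g * B / (A * B) * A = g" if "A \<noteq> 0" "B \<noteq> 0" for A B
        using that by simp
      ultimately show ?thesis using q unfolding C_def by simp
    qed
    ultimately show ?thesis by (simp add: q_def mult.assoc[symmetric])
  qed
  finally show ?thesis by (simp add: g_def)
qed

(* Cauchy transform of the weight along the parametrisation x = 2 sin t: the odd part of the
   kernel integrates to zero against the even weight. *)
lemma weight_cauchy_transform:
  assumes a: "0 \<le> a" "a < 1" and z: "z > 2"
  shows "integral {-pi/2..pi/2} (\<lambda>t. weight a t * (1 / (z - 2 * sin t)))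
           = cos_moment a a * (G z * (1 - (G z)\<^sup>2) powr (a - 1))"
proof -
  define even where "even t = weight a t * (z / (z\<^sup>2 - 4 * (sin t)\<^sup>2))" for t
  define odd where "odd t = weight a t * (2 * sin t / (z\<^sup>2 - 4 * (sin t)\<^sup>2))" for t
  have split: "weight a t * (1 / (z - 2 * sin t)) = even t + odd t" for t
  proof -
    have den: "z\<^sup>2 - 4 * (sin t)\<^sup>2 = (z - 2 * sin t) * (z + 2 * sin t)"
      by (simp add: power2_eq_square algebra_simps)
    have "even t + odd t = weight a t * ((z + 2 * sin t) / (z\<^sup>2 - 4 * (sin t)\<^sup>2))"
      unfolding even_def odd_def by (simp add: add_divide_distrib distrib_left)
    also have "(z + 2 * sin t) / (z\<^sup>2 - 4 * (sin t)\<^sup>2) = 1 / (z - 2 * sin t)"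
      using sin_kernel_pos(2)[OF z, of t] unfolding den by simp
    finally show ?thesis by simp
  qed
  have bound: "\<bar>even t\<bar> \<le> 2 * (z / (z\<^sup>2 - 4))" "\<bar>odd t\<bar> \<le> 2 * (2 / (z\<^sup>2 - 4))"
    if "t \<in> {-pi/2..pi/2}" for t
  proof -
    have den: "z\<^sup>2 - 4 * (sin t)\<^sup>2 \<ge> z\<^sup>2 - 4" "z\<^sup>2 - 4 > 0"
      using sin_kernel_pos(3)[OF z, of t] square_gt_four[OF z] by auto
    have "\<bar>2 * sin t\<bar> \<le> 2" using abs_sin_le_one[of t] by (simp add: abs_mult)
    then have odd_kernel: "\<bar>2 * sin t / (z\<^sup>2 - 4 * (sin t)\<^sup>2)\<bar> \<le> 2 / (z\<^sup>2 - 4)"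
      using den by (simp add: abs_divide frac_le)
    have even_kernel: "\<bar>z / (z\<^sup>2 - 4 * (sin t)\<^sup>2)\<bar> \<le> z / (z\<^sup>2 - 4)"
      using den z by (simp add: abs_divide frac_le)
    have w: "\<bar>weight a t\<bar> \<le> 2" using weight_bounds[OF a that] by simp
    show "\<bar>even t\<bar> \<le> 2 * (z / (z\<^sup>2 - 4))"
      unfolding even_def abs_mult by (rule mult_mono[OF w even_kernel]) auto
    show "\<bar>odd t\<bar> \<le> 2 * (2 / (z\<^sup>2 - 4))"
      unfolding odd_def abs_mult by (rule mult_mono[OF w odd_kernel]) auto
  qed
  have "even integrable_on {-pi/2..pi/2}"
    by (rule lborel_integral_interval(3)[where S="{-pi/2..pi/2}", OF _ _ bound(1)]) (auto simp: even_def)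
  moreover have "odd integrable_on {-pi/2..pi/2}"
    by (rule lborel_integral_interval(3)[where S="{-pi/2..pi/2}", OF _ _ bound(2)]) (auto simp: odd_def)
  moreover have "integral {-pi/2..pi/2} odd = 0"
    using odd_integral_zero[of odd "pi/2"] by (simp add: odd_def weight_even)
  ultimately have "integral {-pi/2..pi/2} (\<lambda>t. weight a t * (1 / (z - 2 * sin t)))
                     = integral {-pi/2..pi/2} even"
    unfolding split by (simp add: integral_add)
  also have "\<dots> = cos_moment a a * (G z * (1 - (G z)\<^sup>2) powr (a - 1))"
    unfolding even_def by (rule weight_even_kernel_integral[OF a z])
  finally show ?thesis .
qed

lemma cos_integral_zero:
  assumes "n > 0"
  shows "integral {-pi/2..pi/2} (\<lambda>t. cos (2 * real n * t)) = 0"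
proof -
  have "((\<lambda>t. cos (2 * real n * t)) has_integral
          (sin (2 * real n * (pi/2)) / (2 * real n) - sin (2 * real n * (-pi/2)) / (2 * real n))) {-pi/2..pi/2}"
    by (rule fundamental_theorem_of_calculus)
       (use assms in \<open>auto intro!: derivative_eq_intros
                      simp: has_real_derivative_iff_has_vector_derivative[symmetric]\<close>)
  moreover have "sin (2 * real n * (pi/2)) = 0" "sin (2 * real n * (-pi/2)) = 0"
    by (simp_all add: mult.commute)
  ultimately show ?thesis by (simp add: integral_unique)
qed

lemma ln_sin_kernel_bound:
  fixes z c t :: real
  assumes z: "z > 2" and c: "\<bar>c\<bar> \<le> 2"
  shows "\<bar>ln (z + c * sin t)\<bar> \<le> \<bar>ln (z - 2)\<bar> + \<bar>ln (z + 2)\<bar>"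
proof -
  have "\<bar>c * sin t\<bar> \<le> 2 * 1"
    unfolding abs_mult using c abs_sin_le_one[of t] by (intro mult_mono) auto
  then have r: "z - 2 \<le> z + c * sin t" "z + c * sin t \<le> z + 2" by auto
  then have "ln (z - 2) \<le> ln (z + c * sin t)" "ln (z + c * sin t) \<le> ln (z + 2)" using z by simp_all
  then show ?thesis by linarith
qed

(* The mean of ln |1 + q e^{2it}|^2 over a period vanishes (Jensen): its cosine series has
   no constant term. *)
lemma log_poisson_integral:
  assumes q: "0 < q" "q < 1"
  shows "integral {-pi/2..pi/2} (\<lambda>t. ln (1 + 2 * q * cos (2 * t) + q\<^sup>2)) = 0"
proof -
  define D where "D t = 1 + 2 * q * cos (2 * t) + q\<^sup>2" for t
  define B where "B = \<bar>ln ((1 - q)\<^sup>2)\<bar> + \<bar>ln ((1 + q)\<^sup>2)\<bar>"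
  have D_bound: "\<bar>ln (D t) / 2\<bar> \<le> B" for t
  proof -
    have bounds: "(1 - q)\<^sup>2 \<le> D t" "D t \<le> (1 + q)\<^sup>2"
      using poisson_denominator_bounds[of q "2 * t"] q by (auto simp: D_def)
    have "0 < (1 - q)\<^sup>2" using q by simp
    then have "ln ((1 - q)\<^sup>2) \<le> ln (D t)" "ln (D t) \<le> ln ((1 + q)\<^sup>2)"
      using bounds by (simp_all only: ln_le_cancel_iff order.strict_trans2[OF _ bounds(1)])
    then show ?thesis unfolding B_def by linarith
  qed
  have "(\<lambda>n. integral {-pi/2..pi/2} (\<lambda>t. 1 * (- ((-q) ^ n * cos (2 * real n * t)) / real n)))
          sums integral {-pi/2..pi/2} (\<lambda>t. 1 * (ln (D t) / 2))"
  proof (rule sums_integral_interval[where W=1 and B=B and M=1 and q=q])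
    show "\<bar>- ((-q) ^ n * cos (2 * real n * t)) / real n\<bar> \<le> 1 * q ^ n" for n t
    proof (cases "n = 0")
      case False
      have "\<bar>- ((-q) ^ n * cos (2 * real n * t)) / real n\<bar> = q ^ n * \<bar>cos (2 * real n * t)\<bar> / real n"
        using q by (simp add: abs_mult power_abs abs_divide)
      also have "\<dots> \<le> q ^ n * 1 / 1"
        using q False by (intro frac_le mult_left_mono) auto
      finally show ?thesis by simp
    qed simp
    show "(\<lambda>n. - ((-q) ^ n * cos (2 * real n * t)) / real n) sums (ln (D t) / 2)" for t
      unfolding D_def by (rule log_cos_series[OF q])
  qed (use q D_bound in \<open>auto simp: D_def\<close>)
  moreover have zero_terms:
    "integral {-pi/2..pi/2} (\<lambda>t. 1 * (- ((-q) ^ n * cos (2 * real n * t)) / real n)) = 0" for n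
    using cos_integral_zero[of n] by (cases "n = 0") (simp_all add: integral_mult_left)
  ultimately have "(\<lambda>n. 0) sums integral {-pi/2..pi/2} (\<lambda>t. 1 * (ln (D t) / 2))"
    by (simp only: zero_terms)
  from sums_unique2[OF this sums_zero] show ?thesis by (simp add: D_def)
qed

lemma log_sin_kernel_symmetrisation:
  assumes z: "z > 2"
  shows "ln (z - 2 * sin t) + ln (z + 2 * sin t)
           = ln (1 + 2 * (G z)\<^sup>2 * cos (2 * t) + ((G z)\<^sup>2)\<^sup>2) - ln ((G z)\<^sup>2)"
proof -
  define q where "q = (G z)\<^sup>2"
  define D where "D = 1 + 2 * q * cos (2 * t) + q\<^sup>2"
  have q: "0 < q" using G_facts[OF z] by (simp add: q_def)
  have factor: "D = q * ((z - 2 * sin t) * (z + 2 * sin t))"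
    using sin_kernel_factorization[OF z, of t]
    by (simp add: q_def D_def power2_eq_square algebra_simps)
  have pos: "z - 2 * sin t > 0" "z + 2 * sin t > 0" using sin_kernel_pos(1,2)[OF z] .
  have "ln (z - 2 * sin t) + ln (z + 2 * sin t) = ln ((z - 2 * sin t) * (z + 2 * sin t))"
    using pos by (simp add: ln_mult)
  also have "\<dots> = ln (D / q)" using factor q by simp
  also have "\<dots> = ln D - ln q" using factor q pos by (intro ln_divide_pos) auto
  finally show ?thesis by (simp add: D_def q_def)
qed

(* The logarithmic potential of the arcsine law in the parametrisation x = 2 sin t. *)
lemma log_sin_kernel_integral:
  assumes z: "z > 2"
  shows "integral {-pi/2..pi/2} (\<lambda>t. ln (z - 2 * sin t)) = - pi * ln (G z)"
proof -
  define q where "q = (G z)\<^sup>2"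
  define D where "D t = 1 + 2 * q * cos (2 * t) + q\<^sup>2" for t
  have q: "0 < q" "q < 1" using G_facts[OF z] by (auto simp: q_def power_less_one_iff)
  have symm: "ln (z - 2 * sin t) + ln (z + 2 * sin t) = ln (D t) - ln q" for t
    using log_sin_kernel_symmetrisation[OF z] by (simp add: D_def q_def)
  have integrable: "(\<lambda>t. ln (z + c * sin t)) integrable_on {-pi/2..pi/2}" if "\<bar>c\<bar> \<le> 2" for c
    by (rule lborel_integral_interval(3)[where S="{-pi/2..pi/2}", OF _ _ ln_sin_kernel_bound[OF z that]])
       auto
  have int_minus: "(\<lambda>t. ln (z - 2 * sin t)) integrable_on {-pi/2..pi/2}"
    using integrable[of "-2"] by simp
  have int_plus: "(\<lambda>t. ln (z + 2 * sin t)) integrable_on {-pi/2..pi/2}"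
    using integrable[of 2] by simp
  have int_D: "(\<lambda>t. ln (D t)) integrable_on {-pi/2..pi/2}"
  proof -
    have "(\<lambda>t. ln (z - 2 * sin t) + ln (z + 2 * sin t) + ln q) integrable_on {-pi/2..pi/2}"
      by (intro integrable_add int_minus int_plus integrable_const_ivl)
    then show ?thesis by (simp add: symm)
  qed
  have reflect: "integral {-pi/2..pi/2} (\<lambda>t. ln (z + 2 * sin t)) = integral {-pi/2..pi/2} (\<lambda>t. ln (z - 2 * sin t))"
    using Henstock_Kurzweil_Integration.integral_reflect_real[of "pi/2" "-(pi/2)" "\<lambda>t. ln (z - 2 * sin t)"]
    by simp
  have "2 * integral {-pi/2..pi/2} (\<lambda>t. ln (z - 2 * sin t))
          = integral {-pi/2..pi/2} (\<lambda>t. ln (z - 2 * sin t) + ln (z + 2 * sin t))"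
    using reflect int_minus int_plus by (simp add: integral_add)
  also have "\<dots> = integral {-pi/2..pi/2} (\<lambda>t. ln (D t)) - integral {-pi/2..pi/2} (\<lambda>t. ln q)"
    unfolding symm by (rule integral_diff[OF int_D integrable_const_ivl])
  also have "\<dots> = - pi * ln q" using log_poisson_integral[OF q] by (simp add: D_def)
  finally show ?thesis using G_facts(1)[OF z] by (simp add: q_def ln_realpow)
qed

lemma density_sin_substitution:
  fixes d :: "real \<Rightarrow> real"
  assumes [measurable]: "d \<in> borel_measurable borel" and nonneg: "\<And>x. d x \<ge> 0"
    and outside: "\<And>x. x \<notin> {-2<..<2} \<Longrightarrow> d x = 0"
  shows "density lborel (\<lambda>x. ennreal (d x))
           = distr (density lborel (\<lambda>t. ennreal (d (2 * sin t) * (2 * cos t) * indicator {-pi/2<..<pi/2} t)))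
                   lborel (\<lambda>t. 2 * sin t)"
    (is "_ = distr ?M lborel ?s")
proof (rule measure_eqI)
  fix A assume "A \<in> sets (density lborel (\<lambda>x. ennreal (d x)))"
  then have A[measurable]: "A \<in> sets borel" by simp
  have "emeasure (density lborel (\<lambda>x. ennreal (d x))) A = (\<integral>\<^sup>+x. ennreal (d x) * indicator A x \<partial>lborel)"
    by (simp add: emeasure_density)
  also have "\<dots> = (\<integral>\<^sup>+x. ennreal (d x * indicator A x * indicator {2 * sin (-pi/2)..2 * sin (pi/2)} x) \<partial>lborel)"
    by (intro nn_integral_cong) (auto split: split_indicator simp: outside)
  also have "\<dots> = (\<integral>\<^sup>+t. ennreal (d (2 * sin t) * indicator A (2 * sin t) * (2 * cos t)
                                * indicator {-pi/2..pi/2} t) \<partial>lborel)"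
    by (rule nn_integral_substitution)
       (auto intro!: derivative_eq_intros continuous_intros cos_ge_zero
             simp: nonneg set_borel_measurable_def)
  also have "\<dots> = (\<integral>\<^sup>+t. ennreal (d (2 * sin t) * (2 * cos t) * indicator {-pi/2<..<pi/2} t)
                             * indicator (?s -` A) t \<partial>lborel)"
  proof (intro nn_integral_cong)
    fix t :: real
    have "d (2 * sin t) = 0" if "t = pi/2 \<or> t = -(pi/2)"
      using that by (elim disjE; hypsubst; simp add: outside)
    then show "ennreal (d (2 * sin t) * indicator A (2 * sin t) * (2 * cos t) * indicator {-pi/2..pi/2} t)
        = ennreal (d (2 * sin t) * (2 * cos t) * indicator {-pi/2<..<pi/2} t) * indicator (?s -` A) t"
      by (cases "t = pi/2 \<or> t = -(pi/2)") (auto split: split_indicator)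
  qed
  also have "\<dots> = emeasure (distr ?M lborel ?s) A"
  proof -
    have "?s -` A \<in> sets lborel" using measurable_sets[of ?s lborel borel A] by simp
    then show ?thesis by (simp add: emeasure_distr emeasure_density)
  qed
  finally show "emeasure (density lborel (\<lambda>x. ennreal (d x))) A = emeasure (distr ?M lborel ?s) A" .
qed simp

lemma nu_dens_measurable[measurable]: "nu_dens lam \<in> borel_measurable borel"
proof -
  have "4 - x\<^sup>2 \<noteq> 0" if "x \<in> {-2<..<2::real}" for x
  proof -
    have "0 < (2 - x) * (2 + x)" using that by (intro mult_pos_pos) auto
    then show ?thesis by (simp add: power2_eq_square algebra_simps)
  qed
  then have cont: "continuous_on {-2<..<2::real}
               (\<lambda>x. cos ((1 - 1 / lam) * arcsin (x / 2)) * (4 - x\<^sup>2) powr (- 1 / (2 * lam)))"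
    by (intro continuous_intros continuous_on_arcsin continuous_on_powr) auto
  then have "(\<lambda>x. indicator {-2<..<2} x *\<^sub>R (cos ((1 - 1 / lam) * arcsin (x / 2))
                * (4 - x\<^sup>2) powr (- 1 / (2 * lam)))) \<in> borel_measurable borel"
    using borel_measurable_continuous_on_indicator[OF _ cont] by simp
  moreover have "(\<lambda>x. indicator {-2<..<2} x *\<^sub>R (cos ((1 - 1 / lam) * arcsin (x / 2))
                * (4 - x\<^sup>2) powr (- 1 / (2 * lam)))) = nu_dens lam"
    by (auto simp: nu_dens_def fun_eq_iff)
  ultimately show ?thesis by simp
qed

lemma nu_dens_outside: "x \<notin> {-2<..<2} \<Longrightarrow> nu_dens lam x = 0"
  unfolding nu_dens_def by simp

lemma nu_dens_nonneg:
  assumes "lam \<ge> 1"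
  shows "nu_dens lam x \<ge> 0"
proof (cases "x \<in> {-2<..<2}")
  case True
  have arcsin: "- (pi/2) \<le> arcsin (x/2) \<and> arcsin (x/2) \<le> pi/2"
    using True by (intro arcsin_bounded) auto
  have a: "0 \<le> 1 - 1/lam" "1 - 1/lam \<le> 1" using assms by (auto simp: field_simps)
  have "\<bar>(1 - 1/lam) * arcsin (x/2)\<bar> \<le> 1 * \<bar>arcsin (x/2)\<bar>"
    unfolding abs_mult using a by (intro mult_right_mono) auto
  also have "\<dots> \<le> pi/2" using arcsin by auto
  finally have "-(pi/2) \<le> (1 - 1/lam) * arcsin (x/2)" "(1 - 1/lam) * arcsin (x/2) \<le> pi/2"
    by (auto simp: abs_le_iff)
  then have "cos ((1 - 1/lam) * arcsin (x/2)) \<ge> 0" by (rule cos_ge_zero)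
  then show ?thesis unfolding nu_dens_def by simp
qed (simp add: nu_dens_outside)

lemma nu_dens_sin:
  assumes "lam \<ge> 1" and t: "t \<in> {-pi/2<..<pi/2}"
  shows "nu_dens lam (2 * sin t) * (2 * cos t) = weight (1 - 1/lam) t"
proof -
  have c: "cos t > 0" using cos_pos_half[OF t] .
  have "4 - (2 * sin t)\<^sup>2 = (2 * cos t)\<^sup>2"
    using sin_cos_squared_add[of t] unfolding power2_eq_square by algebra
  also have "\<dots> = (2 * cos t) powr 2" using c by (simp add: powr_realpow)
  finally have square: "4 - (2 * sin t)\<^sup>2 = (2 * cos t) powr 2" .
  have "(sin t)\<^sup>2 < 1" using sin_cos_squared_add[of t] c by (smt (verit) zero_less_power2)
  then have "\<bar>sin t\<bar> < 1" by (simp add: abs_square_less_1)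
  then have inside: "2 * sin t \<in> {-2<..<2}" by auto
  have arcsin: "arcsin (2 * sin t / 2) = t" using t by (simp add: arcsin_sin)
  have "(4 - (2 * sin t)\<^sup>2) powr (- 1 / (2 * lam)) = ((2 * cos t) powr 2) powr (- 1 / (2 * lam))"
    by (simp only: square)
  also have "\<dots> = (2 * cos t) powr (- 1 / lam)" by (simp add: powr_powr)
  finally have power: "(4 - (2 * sin t)\<^sup>2) powr (- 1 / (2 * lam)) = (2 * cos t) powr (- 1 / lam)" .
  have "(2 * cos t) powr (- 1 / lam) * (2 * cos t) = (2 * cos t) powr (1 - 1 / lam)"
    using powr_mult_base[of "2 * cos t" "- 1 / lam"] c by (simp add: mult.commute)
  then have "nu_dens lam (2 * sin t) * (2 * cos t) = cos ((1 - 1/lam) * t) * (2 * cos t) powr (1 - 1/lam)"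
    unfolding nu_dens_def power arcsin using inside by (simp add: mult.assoc)
  then show ?thesis by (simp add: weight_def mult.commute)
qed

definition nu_const :: "real \<Rightarrow> real" where
  "nu_const lam = 1 / cos_moment (1 - 1/lam) (1 - 1/lam)"

definition nu :: "real \<Rightarrow> real measure" where
  "nu lam = density lborel (\<lambda>x. ennreal (nu_const lam * nu_dens lam x))"

lemma exponent_range:
  fixes lam :: real
  assumes "lam \<ge> 1"
  shows "0 \<le> 1 - 1/lam" "1 - 1/lam < 1"
proof -
  have "0 < lam" using assms by linarith
  then have "0 < 1/lam" "1/lam \<le> 1" using assms by (simp_all add: divide_le_eq_1)
  then show "0 \<le> 1 - 1/lam" "1 - 1/lam < 1" by linarith+
qed

lemma nu_const_pos: "lam \<ge> 1 \<Longrightarrow> nu_const lam > 0"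
  using cos_moment_pos[OF exponent_range] by (simp add: nu_const_def)

lemma nu_image:
  assumes lam: "lam \<ge> 1"
  shows "nu lam = distr (density lborel (\<lambda>t. ennreal (nu_const lam * weight (1 - 1/lam) t
                                                       * indicator {-pi/2..pi/2} t)))
                        lborel (\<lambda>t. 2 * sin t)"
proof -
  have "nu lam = distr (density lborel (\<lambda>t. ennreal (nu_const lam * nu_dens lam (2 * sin t) * (2 * cos t)
                                                     * indicator {-pi/2<..<pi/2} t)))
                       lborel (\<lambda>t. 2 * sin t)"
    unfolding nu_def
    by (rule density_sin_substitution)
       (use nu_const_pos[OF lam] nu_dens_nonneg[OF lam] nu_dens_outside in auto)
  also have "density lborel (\<lambda>t. ennreal (nu_const lam * nu_dens lam (2 * sin t) * (2 * cos t)
                                            * indicator {-pi/2<..<pi/2} t))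
           = density lborel (\<lambda>t. ennreal (nu_const lam * weight (1 - 1/lam) t * indicator {-pi/2..pi/2} t))"
  proof (rule density_cong)
    show "AE t in lborel. ennreal (nu_const lam * nu_dens lam (2 * sin t) * (2 * cos t) * indicator {-pi/2<..<pi/2} t)
                        = ennreal (nu_const lam * weight (1 - 1/lam) t * indicator {-pi/2..pi/2} t)"
    proof (rule AE_I2)
      fix t :: real
      consider "t \<in> {-pi/2<..<pi/2}" | "t = pi/2 \<or> t = -(pi/2)" | "t \<notin> {-pi/2..pi/2}" by force
      then show "ennreal (nu_const lam * nu_dens lam (2 * sin t) * (2 * cos t) * indicator {-pi/2<..<pi/2} t)
               = ennreal (nu_const lam * weight (1 - 1/lam) t * indicator {-pi/2..pi/2} t)"
      proof cases
        case 1
        then show ?thesis using nu_dens_sin[OF lam 1] by (simp add: mult.assoc)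
      next
        case 2
        then show ?thesis using weight_endpoints by (elim disjE; hypsubst; simp)
      qed auto
    qed
  qed simp_all
  finally show ?thesis .
qed

lemma integral_nu:
  fixes F :: "real \<Rightarrow> real"
  assumes lam: "lam \<ge> 1" and [measurable]: "F \<in> borel_measurable borel"
    and bound: "\<And>t. t \<in> {-pi/2..pi/2} \<Longrightarrow> \<bar>F (2 * sin t)\<bar> \<le> B"
  shows "(\<integral>x. F x \<partial>nu lam) = nu_const lam * integral {-pi/2..pi/2} (\<lambda>t. weight (1 - 1/lam) t * F (2 * sin t))"
proof -
  define a where "a = 1 - 1/lam"
  have a: "0 \<le> a" "a < 1" using exponent_range[OF lam] by (auto simp: a_def)
  have nonneg: "0 \<le> nu_const lam * weight a t * indicator {-pi/2..pi/2} t" for t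
    using nu_const_pos[OF lam] weight_bounds(1)[OF a, of t] by (auto simp: indicator_def)
  have "(\<integral>x. F x \<partial>nu lam)
          = (\<integral>t. F (2 * sin t) \<partial>density lborel (\<lambda>t. ennreal (nu_const lam * weight a t * indicator {-pi/2..pi/2} t)))"
    unfolding nu_image[OF lam] a_def[symmetric] by (rule integral_distr) simp_all
  also have "\<dots> = (\<integral>t. nu_const lam * weight a t * indicator {-pi/2..pi/2} t * F (2 * sin t) \<partial>lborel)"
    by (subst integral_density) (use nonneg in \<open>auto intro!: AE_I2\<close>)
  also have "\<dots> = nu_const lam * (\<integral>t. indicator {-pi/2..pi/2} t * (weight a t * F (2 * sin t)) \<partial>lborel)"
    by (simp add: mult_ac)
  also have "(\<integral>t. indicator {-pi/2..pi/2} t * (weight a t * F (2 * sin t)) \<partial>lborel)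
               = integral {-pi/2..pi/2} (\<lambda>t. weight a t * F (2 * sin t))"
  proof (rule lborel_integral_interval(2)[where B="2 * B"])
    show "\<bar>weight a t * F (2 * sin t)\<bar> \<le> 2 * B" if "t \<in> {-pi/2..pi/2}" for t
      using weight_bounds[OF a that] bound[OF that] unfolding abs_mult
      by (intro mult_mono) auto
  qed auto
  finally show ?thesis by (simp add: a_def)
qed

(* Its total mass is nu_const lam times the mass K of the weight, i.e. 1. *)
lemma nu_prob_space:
  assumes lam: "lam \<ge> 1"
  shows "prob_space (nu lam)"
proof (rule prob_spaceI)
  define a where "a = 1 - 1/lam"
  have a: "0 \<le> a" "a < 1" using exponent_range[OF lam] by (auto simp: a_def)
  have bound: "\<bar>weight a t\<bar> \<le> 2" if "t \<in> {-pi/2..pi/2}" for t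
    using weight_bounds[OF a that] by simp
  have "emeasure (nu lam) (space (nu lam))
          = (\<integral>\<^sup>+t. ennreal (nu_const lam * (indicator {-pi/2..pi/2} t * weight a t)) \<partial>lborel)"
    unfolding nu_image[OF lam] a_def[symmetric]
    by (simp add: emeasure_distr emeasure_density mult_ac)
  also have "\<dots> = ennreal (\<integral>t. nu_const lam * (indicator {-pi/2..pi/2} t * weight a t) \<partial>lborel)"
  proof (rule nn_integral_eq_integral)
    show "integrable lborel (\<lambda>t. nu_const lam * (indicator {-pi/2..pi/2} t * weight a t))"
      by (intro integrable_mult_right
                lborel_integral_interval(1)[where S="{-pi/2..pi/2}" and l="-pi/2" and u="pi/2", OF _ _ bound])
         auto
    show "AE t in lborel. 0 \<le> nu_const lam * (indicator {-pi/2..pi/2} t * weight a t)"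
      using weight_bounds(1)[OF a] nu_const_pos[OF lam] by (intro AE_I2) (simp add: indicator_def)
  qed
  also have "\<dots> = ennreal (nu_const lam * (\<integral>t. indicator {-pi/2..pi/2} t * weight a t \<partial>lborel))"
    by simp
  also have "(\<integral>t. indicator {-pi/2..pi/2} t * weight a t \<partial>lborel) = cos_moment a a"
    unfolding cos_moment_def weight_def[symmetric]
    by (rule lborel_integral_interval(2)[where S="{-pi/2..pi/2}" and l="-pi/2" and u="pi/2", OF _ _ bound])
       auto
  also have "nu_const lam * cos_moment a a = 1"
    using cos_moment_pos[OF a] by (simp add: nu_const_def a_def)
  finally show "emeasure (nu lam) (space (nu lam)) = 1" by simp
qed

lemma nu_support: "emeasure (nu lam) (- {-2..2}) = 0"
proof -
  have "emeasure (nu lam) (- {-2..2}) = (\<integral>\<^sup>+x. ennreal (nu_const lam * nu_dens lam x) * indicator (- {-2..2}) x \<partial>lborel)"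
    unfolding nu_def by (rule emeasure_density) auto
  also have "(\<lambda>x. ennreal (nu_const lam * nu_dens lam x) * indicator (- {-2..2}) x) = (\<lambda>x. 0)"
    by (auto simp: fun_eq_iff nu_dens_outside split: split_indicator)
  finally show ?thesis by simp
qed

(* In terms of G, the transform T_lambda reads G (1 - G^2)^(a-1) with a = 1 - 1/lambda,
   using sqrt (z^2 - 4) = (1 - G^2) / G. *)
lemma T_joukowski_form:
  assumes z: "z > 2"
  shows "T lam z = G z * (1 - (G z)\<^sup>2) powr ((1 - 1/lam) - 1)"
proof -
  define g where "g = G z"
  have g: "0 < g" "g < 1" "sqrt (z\<^sup>2 - 4) = 1 / g - g" using G_facts[OF z] unfolding g_def by auto
  have pos: "0 < 1 - g\<^sup>2" using g by (simp add: power_less_one_iff)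
  have "z\<^sup>2 - 4 = (sqrt (z\<^sup>2 - 4)) powr 2" using square_gt_four[OF z] by (simp add: powr_realpow)
  also have "sqrt (z\<^sup>2 - 4) = (1 - g\<^sup>2) / g" using g by (simp add: field_simps power2_eq_square)
  finally have "(z\<^sup>2 - 4) powr (- 1 / (2 * lam)) = ((1 - g\<^sup>2) / g) powr (-1/lam)"
    by (simp add: powr_powr)
  also have "\<dots> = (1 - g\<^sup>2) powr (-1/lam) / g powr (-1/lam)"
    using pos g by (simp add: powr_divide)
  finally have "T lam z = (g powr (1 - 1/lam) / g powr (-1/lam)) * (1 - g\<^sup>2) powr (-1/lam)"
    unfolding T_def g_def by simp
  also have "g powr (1 - 1/lam) / g powr (-1/lam) = g"
    using g by (simp add: powr_diff[symmetric])
  finally show ?thesis unfolding g_def by simp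
qed

lemma nu_cauchy_transform:
  assumes lam: "lam \<ge> 1" and z: "z > 2"
  shows "(\<integral>x. 1 / (z - x) \<partial>nu lam) = T lam z"
proof -
  define a where "a = 1 - 1/lam"
  have a: "0 \<le> a" "a < 1" using exponent_range[OF lam] by (auto simp: a_def)
  have bound: "\<bar>1 / (z - 2 * sin t)\<bar> \<le> 1 / (z - 2)" for t
  proof -
    have "0 < z - 2" "z - 2 \<le> z - 2 * sin t" "0 < z - 2 * sin t"
      using sin_le_one[of t] z by linarith+
    then show ?thesis by (simp add: frac_le abs_of_pos)
  qed
  have "(\<integral>x. 1 / (z - x) \<partial>nu lam)
          = nu_const lam * integral {-pi/2..pi/2} (\<lambda>t. weight a t * (1 / (z - 2 * sin t)))"
    unfolding a_def by (rule integral_nu[where F="\<lambda>x. 1 / (z - x)", OF lam _ bound]) simp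
  also have "\<dots> = nu_const lam * cos_moment a a * (G z * (1 - (G z)\<^sup>2) powr (a - 1))"
    unfolding weight_cauchy_transform[OF a z] by simp
  also have "nu_const lam * cos_moment a a = 1"
    using cos_moment_pos[OF a] by (simp add: nu_const_def a_def)
  finally show ?thesis by (simp add: T_joukowski_form[OF z] a_def)
qed

(* The arcsine law is the image under 2 sin of the uniform law on (-pi/2, pi/2). *)
lemma arcsine_dens_sin: "t \<in> {-pi/2<..<pi/2} \<Longrightarrow> arcsine_dens (2 * sin t) * (2 * cos t) = 1 / pi"
proof -
  assume t: "t \<in> {-pi/2<..<pi/2}"
  have c: "cos t > 0" using cos_pos_half[OF t] .
  have "4 - (2 * sin t)\<^sup>2 = (2 * cos t)\<^sup>2"
    using sin_cos_squared_add[of t] unfolding power2_eq_square by algebra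
  then have "sqrt (4 - (2 * sin t)\<^sup>2) = \<bar>2 * cos t\<bar>" by (simp only: real_sqrt_abs)
  then have "sqrt (4 - (2 * sin t)\<^sup>2) = 2 * cos t" using c by simp
  moreover have "2 * sin t \<in> {-2..2}" using sin_le_one[of t] sin_ge_minus_one[of t] by auto
  ultimately show ?thesis unfolding arcsine_dens_def using c by simp
qed

lemma arcsine_dens_measurable[measurable]: "arcsine_dens \<in> borel_measurable borel"
  unfolding arcsine_dens_def by measurable

lemma arcsine_dens_nonneg: "arcsine_dens x \<ge> 0"
proof (cases "x \<in> {-2..2}")
  case True
  then have "0 \<le> (2 - x) * (2 + x)" by (intro mult_nonneg_nonneg) auto
  then have "0 \<le> 4 - x\<^sup>2" by (simp add: power2_eq_square algebra_simps)
  then show ?thesis unfolding arcsine_dens_def using True by simp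
qed (simp add: arcsine_dens_def)

lemma arcsine_nn_integral_sin:
  assumes [measurable]: "A \<in> sets borel"
  shows "(\<integral>\<^sup>+x. ennreal (arcsine_dens x) * indicator A x \<partial>lborel)
           = (\<integral>\<^sup>+t. ennreal (indicator {-pi/2<..<pi/2} t / pi) * indicator A (2 * sin t) \<partial>lborel)"
proof -
  have outside: "arcsine_dens x = 0" if "x \<notin> {-2<..<2}" for x
    using that by (auto simp: arcsine_dens_def indicator_def)
  have "(\<integral>\<^sup>+x. ennreal (arcsine_dens x) * indicator A x \<partial>lborel)
          = emeasure (density lborel (\<lambda>x. ennreal (arcsine_dens x))) A"
    by (simp add: emeasure_density)
  also have "\<dots> = emeasure (distr (density lborel (\<lambda>t. ennreal (arcsine_dens (2 * sin t) * (2 * cos t)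
                                          * indicator {-pi/2<..<pi/2} t))) lborel (\<lambda>t. 2 * sin t)) A"
    by (subst density_sin_substitution) (auto simp: arcsine_dens_nonneg outside)
  also have "\<dots> = (\<integral>\<^sup>+t. ennreal (arcsine_dens (2 * sin t) * (2 * cos t) * indicator {-pi/2<..<pi/2} t)
                                * indicator A (2 * sin t) \<partial>lborel)"
  proof -
    have "(\<lambda>t. 2 * sin t) -` A \<in> sets lborel" using measurable_sets[of "\<lambda>t. 2 * sin t" lborel borel A] by simp
    then show ?thesis by (simp add: emeasure_distr emeasure_density indicator_vimage)
  qed
  also have "\<dots> = (\<integral>\<^sup>+t. ennreal (indicator {-pi/2<..<pi/2} t / pi) * indicator A (2 * sin t) \<partial>lborel)"
    by (rule nn_integral_cong) (auto simp: arcsine_dens_sin indicator_def)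
  finally show ?thesis .
qed

(* A parametrisation of tau_lambda by Lebesgue measure: the density (1 - 1/lam)/pi on
   (-pi/2, pi/2) is carried to the arcsine part by 2 sin, and the unit intervals [2,3) and
   [3,4), each of mass 1/(2 lam), are collapsed onto the atoms -2 and 2. *)
definition tau_param :: "real \<Rightarrow> real" where
  "tau_param t = (if t \<in> {-pi/2<..<pi/2} then 2 * sin t else if t < 3 then -2 else 2)"

definition tau_param_dens :: "real \<Rightarrow> real \<Rightarrow> real" where
  "tau_param_dens lam t = (1 - 1/lam) / pi * indicator {-pi/2<..<pi/2} t
                          + 1/(2*lam) * indicator {2..<3} t + 1/(2*lam) * indicator {3..<4} t"

lemma tau_param_measurable[measurable]: "tau_param \<in> borel_measurable borel"
  unfolding tau_param_def by measurable

lemma tau_param_dens_measurable[measurable]: "tau_param_dens lam \<in> borel_measurable borel"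
  unfolding tau_param_dens_def by measurable

lemma tau_param_dens_nonneg: "lam \<ge> 1 \<Longrightarrow> 0 \<le> tau_param_dens lam t"
  using exponent_range[of lam] by (simp add: tau_param_dens_def)

lemma tau_param_split:
  "tau_param_dens lam t * h (tau_param t)
     = (1 - 1/lam) / pi * (indicator {-pi/2<..<pi/2} t * h (2 * sin t))
       + 1/(2*lam) * h (-2) * indicator {2..<3} t + 1/(2*lam) * h 2 * indicator {3..<4} t"
proof -
  have "pi/2 < 2" using pi_less_4 by simp
  then consider "t \<in> {-pi/2<..<pi/2}" | "t \<in> {2..<3}" | "t \<in> {3..<4}"
    | "t \<notin> {-pi/2<..<pi/2}" "t \<notin> {2..<3}" "t \<notin> {3..<4}"
    by fastforce
  then show ?thesis
  proof cases
    case 1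
    with \<open>pi/2 < 2\<close> show ?thesis by (auto simp: tau_param_def tau_param_dens_def)
  next
    case 2
    with \<open>pi/2 < 2\<close> show ?thesis by (auto simp: tau_param_def tau_param_dens_def)
  next
    case 3
    with \<open>pi/2 < 2\<close> show ?thesis by (auto simp: tau_param_def tau_param_dens_def)
  qed (simp add: tau_param_dens_def)
qed

lemma ennreal_half_atoms:
  assumes "0 \<le> c"
  shows "ennreal (c/2 * indicator A x) + ennreal (c/2 * indicator A y)
           = ennreal c * ((indicator A x + indicator A y) / 2)"
proof -
  have half: "ennreal (c/2) = ennreal c / 2" using assms by (metis ennreal_divide_numeral)
  have "ennreal (c/2) + ennreal (c/2) = ennreal c"
    using assms by (simp flip: ennreal_plus)
  then have both: "ennreal c / 2 + ennreal c / 2 = ennreal c" by (simp add: half)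
  show ?thesis
    by (cases "x \<in> A"; cases "y \<in> A") (simp_all add: half both ennreal_times_divide)
qed

lemma emeasure_tau_param_image:
  assumes lam: "lam \<ge> 1" and A[measurable]: "A \<in> sets borel"
  shows "emeasure (distr (density lborel (\<lambda>t. ennreal (tau_param_dens lam t))) borel tau_param) A
           = ennreal (1 - 1 / lam) * (\<integral>\<^sup>+ x. ennreal (arcsine_dens x) * indicator A x \<partial>lborel)
             + ennreal (1 / lam) * ((indicator A (-2) + indicator A 2) / 2)"
proof -
  define arc where "arc t = (1 - 1/lam) / pi * (indicator {-pi/2<..<pi/2} t * indicator A (2 * sin t))" for t
  have c: "0 \<le> 1 - 1/lam" "0 \<le> 1/lam" using exponent_range[OF lam] lam by auto
  have atom: "(\<integral>\<^sup>+t. ennreal (k * indicator {a..<b} t) \<partial>lborel) = ennreal (k * (b - a))"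
    if "0 \<le> k" "a \<le> b" for k a b :: real
    using that by (simp add: ennreal_mult'' ennreal_indicator nn_integral_cmult_indicator ennreal_mult)
  have "tau_param -` A \<in> sets lborel" using measurable_sets[of tau_param lborel borel A] by simp
  then have "emeasure (distr (density lborel (\<lambda>t. ennreal (tau_param_dens lam t))) borel tau_param) A
               = (\<integral>\<^sup>+t. ennreal (tau_param_dens lam t * indicator A (tau_param t)) \<partial>lborel)"
    by (simp add: emeasure_distr emeasure_density indicator_vimage ennreal_mult'' ennreal_indicator)
  also have "\<dots> = (\<integral>\<^sup>+t. ennreal (arc t) + (ennreal (1/(2*lam) * indicator A (-2) * indicator {2..<3} t)
                                    + ennreal (1/(2*lam) * indicator A 2 * indicator {3..<4} t)) \<partial>lborel)"
    unfolding tau_param_split arc_def using c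
    by (intro nn_integral_cong) (simp add: ennreal_plus)
  also have "\<dots> = (\<integral>\<^sup>+t. ennreal (arc t) \<partial>lborel)
                   + ((\<integral>\<^sup>+t. ennreal (1/(2*lam) * indicator A (-2) * indicator {(2::real)..<3} t) \<partial>lborel)
                   + (\<integral>\<^sup>+t. ennreal (1/(2*lam) * indicator A 2 * indicator {(3::real)..<4} t) \<partial>lborel))"
    by (simp add: nn_integral_add arc_def)
  also have "(\<integral>\<^sup>+t. ennreal (arc t) \<partial>lborel)
               = ennreal (1 - 1 / lam) * (\<integral>\<^sup>+ x. ennreal (arcsine_dens x) * indicator A x \<partial>lborel)"
  proof -
    have "ennreal ((1 - 1/lam) / pi) = ennreal (1 - 1/lam) * ennreal (1/pi)"
      using c by (simp flip: ennreal_mult)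
    then show ?thesis
      unfolding arcsine_nn_integral_sin[OF A] using c
      by (subst nn_integral_cmult[symmetric])
         (auto simp: arc_def ennreal_mult'' indicator_def intro!: nn_integral_cong)
  qed
  also have "(\<integral>\<^sup>+t. ennreal (1/(2*lam) * indicator A (-2) * indicator {(2::real)..<3} t) \<partial>lborel)
               = ennreal (1/lam/2 * indicator A (-2))"
    using atom[of "1/(2*lam) * indicator A (-2)" 2 3] c by simp
  also have "(\<integral>\<^sup>+t. ennreal (1/(2*lam) * indicator A 2 * indicator {(3::real)..<4} t) \<partial>lborel)
               = ennreal (1/lam/2 * indicator A 2)"
    using atom[of "1/(2*lam) * indicator A 2" 3 4] c by simp
  finally show ?thesis using ennreal_half_atoms[OF c(2), of A "-2" 2] by simp
qed

lemma tau_image: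
  assumes lam: "lam \<ge> 1"
  shows "tau lam = distr (density lborel (\<lambda>t. ennreal (tau_param_dens lam t))) borel tau_param"
    (is "_ = ?R")
proof -
  have "?R = measure_of UNIV (sets borel) (emeasure ?R)"
    using measure_of_of_measure[of ?R] by simp
  also have "\<dots> = tau lam"
    unfolding tau_def
    by (rule measure_of_eq) (use emeasure_tau_param_image[OF lam] sets.sigma_sets_eq[of borel] in auto)
  finally show ?thesis ..
qed

lemma tau_log_potential:
  assumes lam: "lam \<ge> 1" and z: "z > 2"
  shows "(\<integral>x. ln (z - x) \<partial>tau lam) = - (1 - 1/lam) * ln (G z) + (ln (z + 2) + ln (z - 2)) / (2 * lam)"
proof -
  define arc where "arc t = indicator {-pi/2<..<pi/2} t * ln (z - 2 * sin t)" for t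
  have bound: "\<bar>ln (z - 2 * sin t)\<bar> \<le> \<bar>ln (z - 2)\<bar> + \<bar>ln (z + 2)\<bar>" for t
    using ln_sin_kernel_bound[OF z, of "-2" t] by simp
  have "integrable lborel (\<lambda>t. indicator {-pi/2<..<pi/2} t * ln (z - 2 * sin t))"
       "(\<integral>t. indicator {-pi/2<..<pi/2} t * ln (z - 2 * sin t) \<partial>lborel)
          = integral {-pi/2..pi/2} (\<lambda>t. ln (z - 2 * sin t))"
    by (rule lborel_integral_interval(1,2)[where l="-pi/2" and u="pi/2", OF _ _ bound]; force)+
  then have arc: "integrable lborel arc" "(\<integral>t. arc t \<partial>lborel) = - pi * ln (G z)"
    using log_sin_kernel_integral[OF z] by (simp_all add: arc_def[abs_def])
  have unit: "integrable lborel (\<lambda>t. indicator {a..<b} t :: real)" "(\<integral>t. indicator {a..<b} t \<partial>lborel) = b - a"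
    if "a \<le> b" for a b :: real
    using that by (auto intro!: integrable_real_indicator)
  have "(\<integral>x. ln (z - x) \<partial>tau lam)
          = (\<integral>t. ln (z - tau_param t) \<partial>density lborel (\<lambda>t. ennreal (tau_param_dens lam t)))"
    unfolding tau_image[OF lam] by (rule integral_distr) simp_all
  also have "\<dots> = (\<integral>t. tau_param_dens lam t * ln (z - tau_param t) \<partial>lborel)"
    by (subst integral_density) (auto intro!: AE_I2 tau_param_dens_nonneg lam)
  also have "\<dots> = (\<integral>t. (1 - 1/lam) / pi * arc t
                          + (1/(2*lam) * ln (z + 2) * indicator {2..<3} t
                             + 1/(2*lam) * ln (z - 2) * indicator {3..<4} t) \<partial>lborel)"
    by (rule Bochner_Integration.integral_cong[OF refl])
       (simp add: tau_param_split[where h="\<lambda>x. ln (z - x)"] arc_def add.assoc)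
  also have "\<dots> = (1 - 1/lam) / pi * (\<integral>t. arc t \<partial>lborel)
                   + (1/(2*lam) * ln (z + 2) * (\<integral>t. indicator {2..<3::real} t \<partial>lborel)
                      + 1/(2*lam) * ln (z - 2) * (\<integral>t. indicator {3..<4::real} t \<partial>lborel))"
    using arc(1) unit[of 2 3] unit[of 3 4] by simp
  also have "\<dots> = (1 - 1/lam) / pi * (- pi * ln (G z)) + (1/(2*lam) * ln (z + 2) + 1/(2*lam) * ln (z - 2))"
    using arc(2) unit[of 2 3] unit[of 3 4] by simp
  also have "\<dots> = - (1 - 1/lam) * ln (G z) + (ln (z + 2) + ln (z - 2)) / (2 * lam)"
    using lam by (simp add: field_simps)
  finally show ?thesis .
qed

lemma T_exp_log_potential:
  assumes lam: "lam \<ge> 1" and z: "z > 2"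
  shows "T lam z = exp (- (\<integral>x. ln (z - x) \<partial>tau lam))"
proof -
  have "(z\<^sup>2 - 4) = (z + 2) * (z - 2)" by (simp add: power2_eq_square algebra_simps)
  then have "T lam z = exp ((1 - 1/lam) * ln (G z)) * exp ((- 1 / (2 * lam)) * (ln (z + 2) + ln (z - 2)))"
    unfolding T_def using G_facts(1)[OF z] square_gt_four[OF z] z
    by (simp add: powr_def ln_mult)
  also have "\<dots> = exp (- (\<integral>x. ln (z - x) \<partial>tau lam))"
    unfolding tau_log_potential[OF lam z] exp_add[symmetric] by (simp add: field_simps)
  finally show ?thesis .
qed

theorem mainTheorem3:
  fixes lam :: real
  assumes "lam \<ge> 1"
  shows "\<exists>\<nu> :: real measure.
           prob_space \<nu> \<and> sets \<nu> = sets borel \<and> emeasure \<nu> (- {-2..2}) = 0 \<and>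
           (\<forall>z :: real. z > 2 \<longrightarrow>
              (\<integral>x. 1 / (z - x) \<partial>\<nu>) = T lam z \<and>
              T lam z = exp (- (\<integral>x. ln (z - x) \<partial>(tau lam)))) \<and>
           (\<exists>c :: real. c > 0 \<and> \<nu> = density lborel (\<lambda>x. ennreal (c * nu_dens lam x)))"
proof (intro exI[of _ "nu lam"] conjI allI impI)
  show "prob_space (nu lam)" by (rule nu_prob_space[OF assms])
  show "sets (nu lam) = sets borel" by (simp add: nu_def)
  show "emeasure (nu lam) (- {-2..2}) = 0" by (rule nu_support)
  show "(\<integral>x. 1 / (z - x) \<partial>nu lam) = T lam z" if "z > 2" for z
    by (rule nu_cauchy_transform[OF assms that])
  show "T lam z = exp (- (\<integral>x. ln (z - x) \<partial>tau lam))" if "z > 2" for z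
    by (rule T_exp_log_potential[OF assms that])
  show "\<exists>c > 0. nu lam = density lborel (\<lambda>x. ennreal (c * nu_dens lam x))"
    using nu_const_pos[OF assms] by (auto simp: nu_def)
qed
end
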